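(* Let $N\ge 2$, $c\in\mathbb{R}$, and consider Jacobi parameters $a_1,\dots,a_{N-1}>0$, $b_1,\dots,b_N\in\mathbb{R}$ with $\sum_{j=1}^N b_j=c$, equipped with the Poisson bracket described in the context. Let $P_n$ be the monic orthogonal polynomials defined in the context. Then for every $1\le n\le N-1$ and every $w\in\mathbb{C}$, \[ \{a_n^2, P_n(w)\} = -\tfrac12\, a_n^2\, P_{n-1}(w). \]
   Context: The Poisson bracket on functions of $(a_1,\dots,a_{N-1},b_1,\dots,b_N)$ is the bilinear antisymmetric bracket satisfying the Leibniz rule whose only nonzero brackets among the coordinates are $\{b_k,a_k\}=-\tfrac14 a_k$ for $k=1,\dots,N-1$ and $\{b_k,a_{k-1}\}=\tfrac14 a_{k-1}$ for $k=2,\dots,N$ (all brackets $\{a_i,a_j\}$, $\{b_i,b_j\}$ and all other $\{b_i,a_j\}$ vanish). Brackets of functions depending on auxiliary complex variables such as $w$ are computed with these variables held fixed. The monic polynomials are defined by $P_{-1}=0$, $P_0=1$, $P_{j+1}(x)=(x-b_{j+1})P_j(x)-a_j^2P_{j-1}(x)$; equivalently $P_n(x)=\det(x-J_n)$ where $J_n$ is the $n\times n$ tridiagonal matrix with diagonal $b_1,\dots,b_n$ and off-diagonal entries $a_1,\dots,a_{n-1}$. *)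

theory Defs
  imports "HOL-Analysis.Analysis"
begin

text \<open>Phase space coordinates: a point is a pair of sequences (a, b); only
  a 1 .. a (N-1) and b 1 .. b N are coordinates. Observables are complex-valued
  functions of the point (auxiliary variables such as w are held fixed).\<close>

type_synonym observable = "(nat \<Rightarrow> real) \<Rightarrow> (nat \<Rightarrow> real) \<Rightarrow> complex"

definition pd_a :: "observable \<Rightarrow> nat \<Rightarrow> (nat \<Rightarrow> real) \<Rightarrow> (nat \<Rightarrow> real) \<Rightarrow> complex" where
  "pd_a F k a b = vector_derivative (\<lambda>t. F (a(k := t)) b) (at (a k))"

definition pd_b :: "observable \<Rightarrow> nat \<Rightarrow> (nat \<Rightarrow> real) \<Rightarrow> (nat \<Rightarrow> real) \<Rightarrow> complex" where
  "pd_b F k a b = vector_derivative (\<lambda>t. F a (b(k := t))) (at (b k))"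

text \<open>The Poisson bracket {F,G} = sum_{x,y} {x,y} dF/dx dG/dy with only nonzero
  brackets {b_k,a_k} = -a_k/4 (1 <= k <= N-1) and {b_k,a_(k-1)} = a_(k-1)/4 (2 <= k <= N).\<close>

definition poisson :: "nat \<Rightarrow> observable \<Rightarrow> observable \<Rightarrow> (nat \<Rightarrow> real) \<Rightarrow> (nat \<Rightarrow> real) \<Rightarrow> complex" where
  "poisson N F G a b =
     (\<Sum>k\<in>{1..N-1}. complex_of_real (- a k / 4) *
        (pd_b F k a b * pd_a G k a b - pd_a F k a b * pd_b G k a b))
   + (\<Sum>k\<in>{2..N}. complex_of_real (a (k-1) / 4) *
        (pd_b F k a b * pd_a G (k-1) a b - pd_a F (k-1) a b * pd_b G k a b))"

fun jacP :: "(nat \<Rightarrow> real) \<Rightarrow> (nat \<Rightarrow> real) \<Rightarrow> nat \<Rightarrow> complex \<Rightarrow> complex" where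
  "jacP a b 0 w = 1"
| "jacP a b (Suc 0) w = w - complex_of_real (b 1)"
| "jacP a b (Suc (Suc j)) w =
     (w - complex_of_real (b (j + 2))) * jacP a b (Suc j) w
     - complex_of_real ((a (j + 1))\<^sup>2) * jacP a b j w"

end

theory Submission
  imports Defs
begin

text \<open>The observable a_n^2 depends on the single coordinate a_n, whose only nonzero
  brackets are with b_n and b_(n+1). P_n does not involve b_(n+1), and it is affine in
  b_n with slope -P_(n-1); hence the bracket is 2 a_n (a_n/4) (-P_(n-1)).\<close>

lemma pd_b_a_coordinate_function [simp]: "pd_b (\<lambda>a b. f (a n)) k a b = 0"
  unfolding pd_b_def by simp

lemma pd_a_a_coordinate_function:
  "pd_a (\<lambda>a b. f (a n)) k a b = (if k = n then vector_derivative f (at (a n)) else 0)"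
  unfolding pd_a_def by simp

lemma poisson_a_coordinate_function:
  fixes f :: "real \<Rightarrow> complex"
  assumes f: "(f has_vector_derivative f') (at (a n))" and "1 \<le> n" "n < N"
  shows "poisson N (\<lambda>a b. f (a n)) G a b
           = of_real (a n / 4) * f' * (pd_b G n a b - pd_b G (Suc n) a b)"
proof -
  have pd_a_f: "pd_a (\<lambda>a b. f (a n)) k a b = (if k = n then f' else 0)" for k
    using vector_derivative_at[OF f] by (simp add: pd_a_a_coordinate_function)
  have n_in: "n \<in> {1..N-1}" "Suc n \<in> {2..N}"
    using assms(2,3) by auto
  have "poisson N (\<lambda>a b. f (a n)) G a b
      = (\<Sum>k\<in>{1..N-1}. if k = n then of_real (a n / 4) * f' * pd_b G n a b else 0)
      + (\<Sum>k\<in>{2..N}. if k = Suc n then - of_real (a n / 4) * f' * pd_b G (Suc n) a b else 0)"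
    unfolding poisson_def pd_a_f
    by (intro arg_cong2[where f = "(+)"] sum.cong) auto
  also have "\<dots> = of_real (a n / 4) * f' * (pd_b G n a b - pd_b G (Suc n) a b)"
    using n_in by (simp add: sum.delta algebra_simps)
  finally show ?thesis .
qed

lemma jacP_fun_upd_b_above [simp]: "m < k \<Longrightarrow> jacP a (b(k := t)) m w = jacP a b m w"
  by (induction a b m w rule: jacP.induct) auto

lemma pd_b_jacP_above: "n < k \<Longrightarrow> pd_b (\<lambda>a b. jacP a b n w) k a b = 0"
  unfolding pd_b_def by simp

lemma jacP_fun_upd_b_top:
  "jacP a (b(Suc m := t)) (Suc m) w
     = (w - of_real t) * jacP a b m w
       - (if m = 0 then 0 else of_real ((a m)\<^sup>2) * jacP a b (m - 1) w)"
  by (cases m) simp_all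

lemma pd_b_jacP_top: "pd_b (\<lambda>a b. jacP a b (Suc m) w) (Suc m) a b = - jacP a b m w"
proof -
  define R where "R = (if m = 0 then 0 else of_real ((a m)\<^sup>2) * jacP a b (m - 1) w)"
  have "((\<lambda>t. (w - of_real t) * jacP a b m w - R) has_vector_derivative - jacP a b m w)
          (at (b (Suc m)))"
    by (auto intro!: derivative_eq_intros)
  then show ?thesis
    unfolding pd_b_def jacP_fun_upd_b_top R_def[symmetric] by (rule vector_derivative_at)
qed

theorem lemma2p2:
  fixes N n :: nat and c :: real and a b :: "nat \<Rightarrow> real" and w :: complex
  assumes "N \<ge> 2"
    and "\<And>k. 1 \<le> k \<Longrightarrow> k \<le> N - 1 \<Longrightarrow> a k > 0"
    and "(\<Sum>j=1..N. b j) = c"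
    and "1 \<le> n" and "n \<le> N - 1"
  shows "poisson N (\<lambda>a b. complex_of_real ((a n)\<^sup>2)) (\<lambda>a b. jacP a b n w) a b
         = - (1/2) * complex_of_real ((a n)\<^sup>2) * jacP a b (n - 1) w"
proof -
  obtain m where n: "n = Suc m"
    using \<open>1 \<le> n\<close> by (cases n) auto
  have "((\<lambda>t. complex_of_real (t\<^sup>2)) has_vector_derivative of_real (2 * a n)) (at (a n))"
    by (rule has_vector_derivative_of_real) (auto intro!: derivative_eq_intros)
  then have "poisson N (\<lambda>a b. complex_of_real ((a n)\<^sup>2)) (\<lambda>a b. jacP a b n w) a b
      = of_real (a n / 4) * of_real (2 * a n)
        * (pd_b (\<lambda>a b. jacP a b n w) n a b - pd_b (\<lambda>a b. jacP a b n w) (Suc n) a b)"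
    using assms(4,5) by (intro poisson_a_coordinate_function) auto
  also have "\<dots> = of_real (a n / 4) * of_real (2 * a n) * - jacP a b m w"
    by (simp add: n pd_b_jacP_top pd_b_jacP_above)
  also have "\<dots> = - (1/2) * complex_of_real ((a n)\<^sup>2) * jacP a b (n - 1) w"
    by (simp add: n power2_eq_square)
  finally show ?thesis .
qed

end
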